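(* For every data instance $(A,u)\in\mathbb{R}^{n\times m}\times\mathbb{R}^m$, $\tau(A,u)\ge\bar\rho(A,u)$.
   Context: $\tau(A,u):=|z^*|$ with $z^*:=\max_{x\in\mathbb{R}^n}\min_{i}(u_i-a_i^\top x)$, where $a_i$ are the columns of $A$ (assumed of unit Euclidean norm, with $\{A\lambda:\lambda\ge0\}=\mathbb{R}^n$, so the max is attained). For data $d=(A,u)$ let $\mathcal{P}_d=\{x:A^\top x\le u\}$, $\mathcal{F}=\{d:\mathcal{P}_d\ne\emptyset\}$, $\mathcal{I}=\{d:\mathcal{P}_d=\emptyset\}$, with norm $\|(A,u)\|:=\max\{\|A\|_{1,2},\|u\|_\infty\}$, where $\|A\|_{1,2}=\max_{\|w\|_1=1}\|Aw\|_2$. Renegar's distance to ill-posedness: $\bar\rho(d):=\inf_{d+\Delta d\in\mathcal{I}}\|\Delta d\|$ if $d\in\mathcal{F}$, and $\bar\rho(d):=\inf_{d+\Delta d\in\mathcal{F}}\|\Delta d\|$ if $d\in\mathcal{I}$. *)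

theory Defs
  imports "HOL-Analysis.Analysis"
begin

text \<open>Data d = (A,u) with A an n x m real matrix (columns a_i, i ranging over 'm)
  and u in R^m. The polyhedron P_d = {x. A^T x <= u}.\<close>

definition feasible :: "real^'m^'n \<Rightarrow> real^'m \<Rightarrow> bool" where
  "feasible A u \<longleftrightarrow> (\<exists>x::real^'n. \<forall>i. (transpose A *v x) $ i \<le> u $ i)"

definition norm12 :: "real^'m^'n \<Rightarrow> real" where
  "norm12 A = Sup {norm (A *v w) | w. (\<Sum>i\<in>UNIV. \<bar>w $ i\<bar>) = 1}"

definition norm_inf :: "real^'m \<Rightarrow> real" where
  "norm_inf u = Max (range (\<lambda>i. \<bar>u $ i\<bar>))"

definition data_norm :: "real^'m^'n \<Rightarrow> real^'m \<Rightarrow> real" where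
  "data_norm A u = max (norm12 A) (norm_inf u)"

definition rho_bar :: "real^'m^'n \<Rightarrow> real^'m \<Rightarrow> real" where
  "rho_bar A u =
     (if feasible A u
      then Inf {data_norm dA du | dA du. \<not> feasible (A + dA) (u + du)}
      else Inf {data_norm dA du | dA du. feasible (A + dA) (u + du)})"

definition z_star :: "real^'m^'n \<Rightarrow> real^'m \<Rightarrow> real" where
  "z_star A u = Sup (range (\<lambda>x::real^'n. Min (range (\<lambda>i. u $ i - (transpose A *v x) $ i))))"

definition tau :: "real^'m^'n \<Rightarrow> real^'m \<Rightarrow> real" where
  "tau A u = \<bar>z_star A u\<bar>"

end

theory Submission
  imports Defs
begin

text \<open>Shifting every entry of \<open>u\<close> by the same constant \<open>c\<close> shifts the minimal slack
  \<open>min\<^sub>i (u\<^sub>i - a\<^sub>i\<^sup>T x)\<close> of every point by \<open>c\<close>, hence shifts \<open>z\<^sup>*\<close> by \<open>c\<close>. The data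
  \<open>(A, u - (|z\<^sup>*| + \<epsilon>)\<one>)\<close> is infeasible and \<open>(A, u + (|z\<^sup>*| + \<epsilon>)\<one>)\<close> is feasible, and the
  perturbation \<open>(0, c\<one>)\<close> has norm \<open>|c|\<close>. Whichever of the two crosses the boundary
  between \<open>\<F>\<close> and \<open>\<I>\<close> bounds \<open>\<rho>\<close> by \<open>|z\<^sup>*| + \<epsilon>\<close>. The only analytic input is that \<open>z\<^sup>*\<close> is
  a genuine supremum: positive spanning yields \<open>\<lambda> \<ge> 0\<close>, \<open>\<lambda> \<noteq> 0\<close> with \<open>A\<lambda> = 0\<close>, and
  weighting the slacks by \<open>\<lambda>\<close> bounds them above.\<close>

definition min_slack :: "real^'m^'n \<Rightarrow> real^'m \<Rightarrow> real^'n \<Rightarrow> real" where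
  "min_slack A u x = Min (range (\<lambda>i. u $ i - (transpose A *v x) $ i))"

lemma z_star_eq_Sup_min_slack: "z_star A u = Sup (range (min_slack A u))"
  by (simp add: z_star_def min_slack_def)

lemma min_slack_le: "min_slack A u x \<le> u $ i - (transpose A *v x) $ i"
  unfolding min_slack_def by (rule Min_le) auto

lemma min_slack_attained: "\<exists>i. min_slack A u x = u $ i - (transpose A *v x) $ i"
proof -
  have "min_slack A u x \<in> range (\<lambda>i. u $ i - (transpose A *v x) $ i)"
    unfolding min_slack_def by (rule Min_in) auto
  then show ?thesis by auto
qed

lemma feasible_iff_min_slack_nonneg: "feasible A u \<longleftrightarrow> (\<exists>x. min_slack A u x \<ge> 0)"
proof
  assume "feasible A u"
  then obtain x where "\<forall>i. (transpose A *v x) $ i \<le> u $ i"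
    unfolding feasible_def by blast
  moreover obtain i where "min_slack A u x = u $ i - (transpose A *v x) $ i"
    using min_slack_attained by blast
  ultimately show "\<exists>x. min_slack A u x \<ge> 0"
    by (metis diff_ge_0_iff_ge)
next
  assume "\<exists>x. min_slack A u x \<ge> 0"
  then obtain x where "min_slack A u x \<ge> 0" ..
  then have "(transpose A *v x) $ i \<le> u $ i" for i
    using min_slack_le[of A u x i] by linarith
  then show "feasible A u"
    unfolding feasible_def by blast
qed

lemma min_slack_shift: "min_slack A (u + (\<chi> i. c)) x = min_slack A u x + c"
proof -
  have "min_slack A (u + (\<chi> i. c)) x = (MIN i. (u $ i - (transpose A *v x) $ i) + c)"
    unfolding min_slack_def by (simp add: algebra_simps)
  then show ?thesis
    unfolding min_slack_def by (simp add: Min_add_commute)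
qed

lemma positively_spanning_imp_nonneg_kernel:
  fixes A :: "real^'m^'n"
  assumes "{A *v l | l. \<forall>i. l $ i \<ge> 0} = UNIV"
  obtains l where "A *v l = 0" "\<forall>i. l $ i \<ge> 0" "(\<Sum>i\<in>UNIV. l $ i) > 0"
proof -
  obtain k :: 'n where True by simp
  define v :: "real^'n" where "v = axis k 1"
  have "v \<in> {A *v l | l. \<forall>i. l $ i \<ge> 0}" "-v \<in> {A *v l | l. \<forall>i. l $ i \<ge> 0}"
    using assms by simp_all
  then obtain l1 l2 where l1: "A *v l1 = v" "\<forall>i. l1 $ i \<ge> 0"
    and l2: "A *v l2 = -v" "\<forall>i. l2 $ i \<ge> 0"
    unfolding mem_Collect_eq by metis
  have "l1 \<noteq> 0"
    using l1 by (auto simp: v_def axis_eq_0_iff)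
  then obtain j where "l1 $ j > 0"
    using l1(2) by (metis less_eq_real_def vec_eq_iff zero_index)
  then have "(l1 + l2) $ j > 0"
    using l2(2) by (simp add: add_pos_nonneg)
  moreover have "(l1 + l2) $ j \<le> (\<Sum>i\<in>UNIV. (l1 + l2) $ i)"
    by (rule member_le_sum) (use l1 l2 in \<open>auto intro: add_nonneg_nonneg\<close>)
  moreover have "A *v (l1 + l2) = 0"
    using l1 l2 by (simp add: matrix_vector_right_distrib)
  ultimately show ?thesis
    using l1 l2 that[of "l1 + l2"] by (simp add: add_nonneg_nonneg)
qed

lemma bdd_above_min_slack:
  fixes A :: "real^'m^'n"
  assumes "{A *v l | l. \<forall>i. l $ i \<ge> 0} = UNIV"
  shows "bdd_above (range (min_slack A u))"
proof -
  obtain l where Al: "A *v l = 0" and l_nonneg: "\<forall>i. l $ i \<ge> 0"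
    and L_pos: "(\<Sum>i\<in>UNIV. l $ i) > 0"
    using positively_spanning_imp_nonneg_kernel[OF assms] by blast
  have "min_slack A u x \<le> (l \<bullet> u) / (\<Sum>i\<in>UNIV. l $ i)" for x
  proof -
    have "l \<bullet> (transpose A *v x) = 0"
      using Al by (simp add: transpose_matrix_vector dot_lmul_matrix inner_commute[of l])
    then have "l \<bullet> u = (\<Sum>i\<in>UNIV. l $ i * (u $ i - (transpose A *v x) $ i))"
      by (simp add: inner_vec_def right_diff_distrib sum_subtractf)
    also have "\<dots> \<ge> (\<Sum>i\<in>UNIV. l $ i * min_slack A u x)"
      by (rule sum_mono, rule mult_left_mono[OF min_slack_le]) (use l_nonneg in auto)
    finally have "min_slack A u x * (\<Sum>i\<in>UNIV. l $ i) \<le> l \<bullet> u"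
      by (simp add: sum_distrib_right mult.commute)
    then show ?thesis
      using L_pos by (simp add: pos_le_divide_eq)
  qed
  then show ?thesis
    by (meson bdd_aboveI2)
qed

lemma data_norm_nonneg:
  fixes A :: "real^'m^'n" and u :: "real^'m"
  shows "data_norm A u \<ge> 0"
proof -
  obtain k :: 'm where True by simp
  have "\<bar>u $ k\<bar> \<le> norm_inf u"
    unfolding norm_inf_def by (rule Max_ge) auto
  then show ?thesis
    unfolding data_norm_def by linarith
qed

lemma norm12_zero: "norm12 (0::real^'m^'n) = 0"
proof -
  obtain k :: 'm where True by simp
  have "(\<Sum>i\<in>UNIV. \<bar>axis k (1::real) $ i\<bar>) = 1"
    by (simp add: axis_def if_distrib sum.delta cong: if_cong)
  then have "{norm ((0::real^'m^'n) *v w) | w. (\<Sum>i\<in>UNIV. \<bar>w $ i\<bar>) = 1} = {0}"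
    by auto
  then show ?thesis
    unfolding norm12_def by simp
qed

lemma data_norm_zero_const: "data_norm (0::real^'m^'n) (\<chi> i. c) = \<bar>c\<bar>"
proof -
  have "range (\<lambda>i::'m. \<bar>(\<chi> i. c) $ i\<bar>) = {\<bar>c\<bar>}"
    by auto
  then show ?thesis
    unfolding data_norm_def norm_inf_def by (simp add: norm12_zero)
qed

lemma rho_bar_le_shift:
  fixes A :: "real^'m^'n"
  assumes "feasible A u \<noteq> feasible A (u + (\<chi> i. c))"
  shows "rho_bar A u \<le> \<bar>c\<bar>"
proof -
  have bdd: "bdd_below {data_norm dA du | dA du. P dA du}" for P
    by (rule bdd_belowI[of _ 0]) (auto simp: data_norm_nonneg)
  have "data_norm (0::real^'m^'n) (\<chi> i. c)
      \<in> {data_norm dA du | dA du. feasible (A + dA) (u + du) = (\<not> feasible A u)}"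
    using assms by (intro CollectI exI[of _ "0::real^'m^'n"] exI[of _ "\<chi> i. c"]) auto
  then have "Inf {data_norm dA du | dA du. feasible (A + dA) (u + du) = (\<not> feasible A u)}
      \<le> data_norm (0::real^'m^'n) (\<chi> i. c)"
    by (rule cInf_lower[OF _ bdd])
  then show ?thesis
    by (cases "feasible A u") (simp_all add: rho_bar_def data_norm_zero_const)
qed

theorem mainTheorem15:
  fixes A :: "real^'m^'n" and u :: "real^'m"
  assumes "\<forall>i. norm (column i A) = 1"
    and "{A *v l | l. \<forall>i. l $ i \<ge> 0} = UNIV"
  shows "tau A u \<ge> rho_bar A u"
proof -
  define z where "z = z_star A u"
  have slack_le_z: "min_slack A u x \<le> z" for x
    unfolding z_def z_star_eq_Sup_min_slack
    by (rule cSup_upper[OF _ bdd_above_min_slack[OF assms(2)]]) auto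
  have "rho_bar A u \<le> \<bar>z\<bar> + e" if "e > 0" for e
  proof (cases "feasible A u")
    case True
    have "min_slack A u x + - (\<bar>z\<bar> + e) < 0" for x
      using slack_le_z[of x] \<open>e > 0\<close> by linarith
    then have "\<not> feasible A (u + (\<chi> i. - (\<bar>z\<bar> + e)))"
      unfolding feasible_iff_min_slack_nonneg min_slack_shift not_ex not_le by blast
    then show ?thesis
      using rho_bar_le_shift[of A u "- (\<bar>z\<bar> + e)"] True \<open>e > 0\<close> by simp
  next
    case False
    obtain x where "z - e < min_slack A u x"
      using \<open>e > 0\<close> less_cSupD[of "range (min_slack A u)" "z - e"]
      by (auto simp: z_def z_star_eq_Sup_min_slack)
    then have "min_slack A u x + (\<bar>z\<bar> + e) \<ge> 0"
      by linarith
    then have "feasible A (u + (\<chi> i. \<bar>z\<bar> + e))"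
      by (auto simp: feasible_iff_min_slack_nonneg min_slack_shift)
    then show ?thesis
      using rho_bar_le_shift[of A u "\<bar>z\<bar> + e"] False \<open>e > 0\<close> by simp
  qed
  then show ?thesis
    unfolding tau_def z_def[symmetric] by (rule field_le_epsilon)
qed

end
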